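(* Let $(E,\mathscr{T},\le)$ be a $T_2$-preordered Tychonoff space such that the quotient $(E/\!\sim,\mathscr{T}/\!\sim,\lesssim)$ is a completely regularly ordered space. Then the preorder $\le$ is represented by the continuous isotone functions on $E$, i.e. $G(\le)=\bigcap_{f\in\mathcal{F}}G_f$ with $\mathcal{F}$ the family of continuous isotone $f:E\to[0,1]$. Let $\beta:E\to(\beta E,\mathscr{T}_\beta,\le_\beta)$ be the Stone–Čech compactification with the preorder $G(\le_\beta)=\bigcap_{f\in\mathcal{F}}G_{\tilde f}$, $\tilde f$ the unique continuous extension of $f\circ\beta^{-1}$ to $\beta E$; let $\sim_\beta$ be the equivalence ($x\le_\beta y$ and $y\le_\beta x$) and $\Pi:\beta E\to\beta E/\!\sim_\beta$ the quotient projection onto the $T_2$-ordered space $(\beta E/\!\sim_\beta,\mathscr{T}_\beta/\!\sim_\beta,\lesssim_\beta)$, and $\pi:E\to E/\!\sim$ the quotient projection. Then $\varphi:=\Pi\circ\beta\circ\pi^{-1}:E/\!\sim\,\to\beta E/\!\sim_\beta$ is a well-defined map, it is a $T_2$-order compactification of $E/\!\sim$ equivalent to the Nachbin $T_2$-order compactification $n:E/\!\sim\,\to n(E/\!\sim)$, and $\varphi\circ\pi=\Pi\circ\beta$.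
   Context: A topological preordered space $(E,\mathscr{T},\le)$ is $T_2$-preordered if $G(\le)=\{(x,y):x\le y\}$ is closed in $E\times E$; $T_2$-ordered if moreover $\le$ is antisymmetric. Isotone: $x\le y\Rightarrow f(x)\le f(y)$; $G_f=\{(x,y):f(x)\le f(y)\}$. For a preorder $\le$, $x\sim y$ means $x\le y$ and $y\le x$; $E/\!\sim$ carries the quotient topology and the order $[x]\lesssim[y]$ iff $x\le y$. A topological ordered space is completely regularly ordered if its topology is the initial topology of its continuous isotone functions into $[0,1]$ and $x\le y$ iff $f(x)\le f(y)$ for all such $f$. A preorder embedding is a continuous isotone injective map which is a homeomorphism onto its image with isotone inverse (image with induced preorder); a ($T_2$-order) compactification of an ordered space $X$ is a preorder embedding with dense image into a compact Hausdorff $T_2$-ordered space. $c_1\le c_2$ means there is a continuous isotone $C:c_2X\to c_1X$ with $C\circ c_2=c_1$; equivalent means both $c_1\le c_2$ and $c_2\le c_1$. The Nachbin $T_2$-order compactification of a completely regularly ordered space $X$ is the (unique up to equivalence) $T_2$-order compactification $n:X\to nX$ such that every continuous isotone function $X\to[0,1]$ extends to a continuous isotone function on $nX$. *)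

theory Defs
  imports "HOL-Analysis.Analysis"
begin

text \<open>A topological preordered space is a pair of a topology X and a relation le,
  only its restriction to topspace X matters.\<close>

definition preorder_on :: "'a set \<Rightarrow> ('a \<Rightarrow> 'a \<Rightarrow> bool) \<Rightarrow> bool" where
  "preorder_on S le \<longleftrightarrow> (\<forall>x\<in>S. le x x) \<and>
     (\<forall>x\<in>S. \<forall>y\<in>S. \<forall>z\<in>S. le x y \<longrightarrow> le y z \<longrightarrow> le x z)"

definition partial_order_on :: "'a set \<Rightarrow> ('a \<Rightarrow> 'a \<Rightarrow> bool) \<Rightarrow> bool" where
  "partial_order_on S le \<longleftrightarrow> preorder_on S le \<and>
     (\<forall>x\<in>S. \<forall>y\<in>S. le x y \<longrightarrow> le y x \<longrightarrow> x = y)"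

definition graph_rel :: "'a topology \<Rightarrow> ('a \<Rightarrow> 'a \<Rightarrow> bool) \<Rightarrow> ('a \<times> 'a) set" where
  "graph_rel X le = {(x,y). x \<in> topspace X \<and> y \<in> topspace X \<and> le x y}"

definition T2_preordered :: "'a topology \<Rightarrow> ('a \<Rightarrow> 'a \<Rightarrow> bool) \<Rightarrow> bool" where
  "T2_preordered X le \<longleftrightarrow> preorder_on (topspace X) le \<and>
     closedin (prod_topology X X) (graph_rel X le)"

definition T2_ordered :: "'a topology \<Rightarrow> ('a \<Rightarrow> 'a \<Rightarrow> bool) \<Rightarrow> bool" where
  "T2_ordered X le \<longleftrightarrow> T2_preordered X le \<and> partial_order_on (topspace X) le"

definition Tychonoff_space :: "'a topology \<Rightarrow> bool" where
  "Tychonoff_space X \<longleftrightarrow> completely_regular_space X \<and> Hausdorff_space X"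

definition isotone :: "'a topology \<Rightarrow> ('a \<Rightarrow> 'a \<Rightarrow> bool) \<Rightarrow> ('b \<Rightarrow> 'b \<Rightarrow> bool) \<Rightarrow> ('a \<Rightarrow> 'b) \<Rightarrow> bool" where
  "isotone X le le' f \<longleftrightarrow> (\<forall>x\<in>topspace X. \<forall>y\<in>topspace X. le x y \<longrightarrow> le' (f x) (f y))"

abbreviation unit_interval :: "real topology" where
  "unit_interval \<equiv> top_of_set {0..1}"

definition cont_iso :: "'a topology \<Rightarrow> ('a \<Rightarrow> 'a \<Rightarrow> bool) \<Rightarrow> ('a \<Rightarrow> real) set" where
  "cont_iso X le = {f. continuous_map X unit_interval f \<and> isotone X le (\<le>) f}"

definition completely_regularly_ordered :: "'a topology \<Rightarrow> ('a \<Rightarrow> 'a \<Rightarrow> bool) \<Rightarrow> bool" where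
  "completely_regularly_ordered X le \<longleftrightarrow>
     partial_order_on (topspace X) le \<and>
     X = topology_generated_by
           {{x \<in> topspace X. f x \<in> U} | f U. f \<in> cont_iso X le \<and> openin unit_interval U} \<and>
     (\<forall>x\<in>topspace X. \<forall>y\<in>topspace X. le x y \<longleftrightarrow> (\<forall>f\<in>cont_iso X le. f x \<le> f y))"

definition equiv_of :: "('a \<Rightarrow> 'a \<Rightarrow> bool) \<Rightarrow> 'a \<Rightarrow> 'a \<Rightarrow> bool" where
  "equiv_of le x y \<longleftrightarrow> le x y \<and> le y x"

definition quot_proj :: "'a topology \<Rightarrow> ('a \<Rightarrow> 'a \<Rightarrow> bool) \<Rightarrow> 'a \<Rightarrow> 'a set" where
  "quot_proj X le x = {y \<in> topspace X. equiv_of le x y}"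

definition quot_top :: "'a topology \<Rightarrow> ('a \<Rightarrow> 'a \<Rightarrow> bool) \<Rightarrow> 'a set topology" where
  "quot_top X le = topology (\<lambda>U. U \<subseteq> quot_proj X le ` topspace X \<and>
      openin X {x \<in> topspace X. quot_proj X le x \<in> U})"

definition quot_le :: "('a \<Rightarrow> 'a \<Rightarrow> bool) \<Rightarrow> 'a set \<Rightarrow> 'a set \<Rightarrow> bool" where
  "quot_le le A B \<longleftrightarrow> (\<exists>x\<in>A. \<exists>y\<in>B. le x y)"

definition preorder_embedding ::
  "'a topology \<Rightarrow> ('a \<Rightarrow> 'a \<Rightarrow> bool) \<Rightarrow> 'b topology \<Rightarrow> ('b \<Rightarrow> 'b \<Rightarrow> bool) \<Rightarrow> ('a \<Rightarrow> 'b) \<Rightarrow> bool" where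
  "preorder_embedding X le Y le' e \<longleftrightarrow>
     continuous_map X Y e \<and> isotone X le le' e \<and> inj_on e (topspace X) \<and>
     embedding_map X Y e \<and>
     (\<forall>x\<in>topspace X. \<forall>y\<in>topspace X. le' (e x) (e y) \<longrightarrow> le x y)"

definition order_compactification ::
  "'a topology \<Rightarrow> ('a \<Rightarrow> 'a \<Rightarrow> bool) \<Rightarrow> 'b topology \<Rightarrow> ('b \<Rightarrow> 'b \<Rightarrow> bool) \<Rightarrow> ('a \<Rightarrow> 'b) \<Rightarrow> bool" where
  "order_compactification X le Y le' c \<longleftrightarrow>
     preorder_embedding X le Y le' c \<and> Y closure_of (c ` topspace X) = topspace Y \<and>
     compact_space Y \<and> Hausdorff_space Y \<and> T2_ordered Y le'"

definition compact_le ::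
  "'a topology \<Rightarrow> 'b topology \<Rightarrow> ('b \<Rightarrow> 'b \<Rightarrow> bool) \<Rightarrow> ('a \<Rightarrow> 'b) \<Rightarrow>
   'c topology \<Rightarrow> ('c \<Rightarrow> 'c \<Rightarrow> bool) \<Rightarrow> ('a \<Rightarrow> 'c) \<Rightarrow> bool" where
  "compact_le X Y1 le1 c1 Y2 le2 c2 \<longleftrightarrow>
     (\<exists>C. continuous_map Y2 Y1 C \<and> isotone Y2 le2 le1 C \<and> (\<forall>x\<in>topspace X. C (c2 x) = c1 x))"

definition compact_equiv ::
  "'a topology \<Rightarrow> 'b topology \<Rightarrow> ('b \<Rightarrow> 'b \<Rightarrow> bool) \<Rightarrow> ('a \<Rightarrow> 'b) \<Rightarrow>
   'c topology \<Rightarrow> ('c \<Rightarrow> 'c \<Rightarrow> bool) \<Rightarrow> ('a \<Rightarrow> 'c) \<Rightarrow> bool" where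
  "compact_equiv X Y1 le1 c1 Y2 le2 c2 \<longleftrightarrow>
     compact_le X Y1 le1 c1 Y2 le2 c2 \<and> compact_le X Y2 le2 c2 Y1 le1 c1"

definition nachbin_compactification ::
  "'a topology \<Rightarrow> ('a \<Rightarrow> 'a \<Rightarrow> bool) \<Rightarrow> 'b topology \<Rightarrow> ('b \<Rightarrow> 'b \<Rightarrow> bool) \<Rightarrow> ('a \<Rightarrow> 'b) \<Rightarrow> bool" where
  "nachbin_compactification X le Y le' n \<longleftrightarrow>
     order_compactification X le Y le' n \<and>
     (\<forall>f\<in>cont_iso X le. \<exists>g\<in>cont_iso Y le'. \<forall>x\<in>topspace X. g (n x) = f x)"

definition stone_cech :: "'a topology \<Rightarrow> 'b topology \<Rightarrow> ('a \<Rightarrow> 'b) \<Rightarrow> bool" where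
  "stone_cech X B b \<longleftrightarrow>
     embedding_map X B b \<and> B closure_of (b ` topspace X) = topspace B \<and>
     compact_space B \<and> Hausdorff_space B \<and>
     (\<forall>f. continuous_map X unit_interval f \<longrightarrow>
        (\<exists>g. continuous_map B unit_interval g \<and> (\<forall>x\<in>topspace X. g (b x) = f x)))"

text \<open>The preorder on beta E: G(le_beta) = intersection of the G of the extensions
  f~ of f o beta^-1, f ranging over the continuous isotone functions on E.
  (The extension is unique on topspace B, so quantifying over all extensions is the same.)\<close>
definition beta_le :: "'a topology \<Rightarrow> ('a \<Rightarrow> 'a \<Rightarrow> bool) \<Rightarrow> 'b topology \<Rightarrow> ('a \<Rightarrow> 'b) \<Rightarrow> 'b \<Rightarrow> 'b \<Rightarrow> bool" where
  "beta_le X le B b x y \<longleftrightarrow>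
     (\<forall>f\<in>cont_iso X le. \<forall>g. continuous_map B unit_interval g \<and> (\<forall>z\<in>topspace X. g (b z) = f z)
        \<longrightarrow> g x \<le> g y)"

end

theory Submission
  imports Defs
begin

text \<open>If f is continuous and isotone on E, then f is constant on the classes of ~ and descends to
  E/~; as E/~ is completely regularly ordered, these functions represent the preorder of E.
  The preorder on \<beta>E is cut out by the extensions of these functions, so \<beta>E/~ is the image of \<beta>E
  in a product of unit intervals: a compact T2-ordered space, containing E/~ as an order
  embedding because the same functions generate the topology of E/~. Given a Nachbin
  compactification N, every such function extends to N as well, and comparing coordinates gives
  a continuous isotone map N \<rightarrow> \<beta>E/~ over E/~. It is a bijection because continuous isotone
  functions separate the order of the compact T2-ordered space N (Nachbin's ordered Urysohn
  lemma), and compactness makes its inverse continuous.\<close>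

section \<open>Compact T2-preordered spaces\<close>

definition down_closure :: "'a topology \<Rightarrow> ('a \<Rightarrow> 'a \<Rightarrow> bool) \<Rightarrow> 'a set \<Rightarrow> 'a set" where
  "down_closure X le K = {x \<in> topspace X. \<exists>y\<in>K. le x y}"

abbreviation up_closure :: "'a topology \<Rightarrow> ('a \<Rightarrow> 'a \<Rightarrow> bool) \<Rightarrow> 'a set \<Rightarrow> 'a set" where
  "up_closure X le \<equiv> down_closure X (\<lambda>x y. le y x)"

definition decreasing_in :: "'a topology \<Rightarrow> ('a \<Rightarrow> 'a \<Rightarrow> bool) \<Rightarrow> 'a set \<Rightarrow> bool" where
  "decreasing_in X le V \<longleftrightarrow> V \<subseteq> topspace X \<and> (\<forall>x\<in>topspace X. \<forall>y\<in>V. le x y \<longrightarrow> x \<in> V)"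

abbreviation increasing_in :: "'a topology \<Rightarrow> ('a \<Rightarrow> 'a \<Rightarrow> bool) \<Rightarrow> 'a set \<Rightarrow> bool" where
  "increasing_in X le \<equiv> decreasing_in X (\<lambda>x y. le y x)"

lemma preorder_on_flip: "preorder_on S le \<Longrightarrow> preorder_on S (\<lambda>x y. le y x)"
  unfolding preorder_on_def by blast

lemma closedin_graph_rel_converse:
  assumes "closedin (prod_topology X X) (graph_rel X le)"
  shows "closedin (prod_topology X X) (graph_rel X (\<lambda>x y. le y x))"
proof -
  have "graph_rel X (\<lambda>x y. le y x) = (\<lambda>(x, y). (y, x)) ` graph_rel X le"
    by (auto simp: graph_rel_def image_iff)
  moreover have "closed_map (prod_topology X X) (prod_topology X X) (\<lambda>(x, y). (y, x))"
    using homeomorphic_imp_closed_map homeomorphic_map_swap by blast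
  ultimately show ?thesis
    using assms unfolding closed_map_def by simp
qed

lemma T2_preordered_converse: "T2_preordered X le \<Longrightarrow> T2_preordered X (\<lambda>x y. le y x)"
  by (simp add: T2_preordered_def preorder_on_flip closedin_graph_rel_converse)

lemma closedin_down_closure:
  assumes "compact_space X" "Hausdorff_space X" "T2_preordered X le" "closedin X K"
  shows "closedin X (down_closure X le K)"
proof -
  let ?G = "graph_rel X le \<inter> (topspace X \<times> K)"
  have "down_closure X le K = fst ` ?G"
    using closedin_subset[OF assms(4)] by (force simp: down_closure_def graph_rel_def)
  moreover have "compactin (prod_topology X X) ?G"
  proof (rule closedin_compact_space)
    show "compact_space (prod_topology X X)"
      using assms(1) by (simp add: compact_space_prod_topology)
    show "closedin (prod_topology X X) ?G"
      using assms(3,4) by (intro closedin_Int) (simp_all add: T2_preordered_def closedin_prod_Times_iff)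
  qed
  ultimately show ?thesis
    using assms(2) image_compactin continuous_map_fst compactin_imp_closedin by metis
qed

lemma decreasing_in_down_closure:
  assumes "preorder_on (topspace X) le" "K \<subseteq> topspace X"
  shows "decreasing_in X le (down_closure X le K)"
  using assms unfolding decreasing_in_def down_closure_def preorder_on_def
  by (smt (verit) mem_Collect_eq subsetD subsetI)

lemma subset_down_closure:
  "preorder_on (topspace X) le \<Longrightarrow> K \<subseteq> topspace X \<Longrightarrow> K \<subseteq> down_closure X le K"
  unfolding down_closure_def preorder_on_def by auto

lemma decreasing_in_Diff: "increasing_in X le V \<Longrightarrow> decreasing_in X le (topspace X - V)"
  unfolding decreasing_in_def by auto

text \<open>In a compact T2-preordered space, the largest decreasing subset of an open set is open.\<close>

lemma open_decreasing_between:
  assumes X: "compact_space X" "Hausdorff_space X" "T2_preordered X le"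
    and A: "decreasing_in X le A" and W: "openin X W" "A \<subseteq> W"
  obtains U where "openin X U" "decreasing_in X le U" "A \<subseteq> U" "U \<subseteq> W"
proof
  let ?U = "topspace X - up_closure X le (topspace X - W)"
  have po: "preorder_on (topspace X) le"
    using X(3) by (simp add: T2_preordered_def)
  show "openin X ?U"
    using closedin_down_closure[OF X(1,2) T2_preordered_converse[OF X(3)]] W(1) by blast
  show "decreasing_in X le ?U"
    by (rule decreasing_in_Diff, rule decreasing_in_down_closure[OF preorder_on_flip[OF po]]) auto
  show "A \<subseteq> ?U"
  proof
    fix a assume a: "a \<in> A"
    have "\<not> le z a" if "z \<in> topspace X - W" for z
      using A a W(2) that unfolding decreasing_in_def by blast
    moreover have "a \<in> topspace X"
      using A a unfolding decreasing_in_def by blast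
    ultimately show "a \<in> ?U"
      by (auto simp: down_closure_def)
  qed
  show "?U \<subseteq> W"
    using subset_down_closure[OF preorder_on_flip[OF po], of "topspace X - W"] by blast
qed

lemma open_decreasing_shrink:
  assumes X: "compact_space X" "Hausdorff_space X" "T2_preordered X le"
    and K: "closedin X K" and W: "openin X W" "decreasing_in X le W" "K \<subseteq> W"
  obtains U where "openin X U" "decreasing_in X le U" "K \<subseteq> U" "X closure_of U \<subseteq> W"
proof -
  have po: "preorder_on (topspace X) le"
    using X(3) by (simp add: T2_preordered_def)
  let ?A = "down_closure X le K"
  have "?A \<subseteq> W"
    using W(2,3) by (auto simp: decreasing_in_def down_closure_def)
  moreover have "closedin X ?A"
    using X K by (rule closedin_down_closure)
  moreover have "normal_space X"
    using X compact_Hausdorff_or_regular_imp_normal_space by blast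
  moreover have "closedin X (topspace X - W)"
    using W(1) by blast
  moreover have "disjnt ?A (topspace X - W)"
    using \<open>?A \<subseteq> W\<close> by (auto simp: disjnt_def)
  ultimately obtain W1 W2 where W12: "openin X W1" "openin X W2" "?A \<subseteq> W1"
      "topspace X - W \<subseteq> W2" "disjnt W1 W2"
    unfolding normal_space_def by meson
  obtain U where U: "openin X U" "decreasing_in X le U" "?A \<subseteq> U" "U \<subseteq> W1"
    using open_decreasing_between[OF X decreasing_in_down_closure[OF po] W12(1,3)] closedin_subset[OF K] .
  have "X closure_of U \<subseteq> topspace X - W2"
    using U(4) W12(2,5) openin_subset[OF U(1)] by (intro closure_of_minimal) (auto simp: disjnt_def)
  then have "X closure_of U \<subseteq> W"
    using W12(4) by blast
  moreover have "K \<subseteq> U"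
    using subset_down_closure[OF po closedin_subset[OF K]] U(3) by (rule order_trans)
  ultimately show thesis
    using that[OF U(1,2)] by blast
qed

lemma dyadics_dense:
  fixes a b :: real
  assumes "0 \<le> a" "a < b"
  obtains r where "r \<in> dyadics" "a < r" "r < b"
proof -
  obtain n q r where qr: "of_nat q / 2^n \<le> a" "a < of_nat r / 2^n" "\<bar>q / 2^n - r / 2^n\<bar> < b - a"
  proof (rule padic_rational_approximation_straddle_pos_le)
    show "0 < b - a" "(1::real) < 2" "0 \<le> a"
      using assms by auto
  qed
  show thesis
  proof
    show "of_nat r / 2^n \<in> (dyadics :: real set)"
      by (auto simp: dyadics_def)
  qed (use qr in \<open>auto simp: abs_less_iff\<close>)
qed

text \<open>G r plays the role of the sublevel set {f < r} of the function being built.\<close>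

definition Urysohn_function :: "(real \<Rightarrow> 'a set) \<Rightarrow> 'a \<Rightarrow> real" where
  "Urysohn_function G x = Inf (insert 1 {r \<in> dyadics \<inter> {0..1}. x \<in> G r})"

lemma Urysohn_function_le: "r \<in> dyadics \<inter> {0..1} \<Longrightarrow> x \<in> G r \<Longrightarrow> Urysohn_function G x \<le> r"
  unfolding Urysohn_function_def by (rule cInf_lower) (auto intro: bdd_belowI[of _ 0])

lemma Urysohn_function_le_1: "Urysohn_function G x \<le> 1"
  unfolding Urysohn_function_def by (rule cInf_lower) (auto intro: bdd_belowI[of _ 0])

lemma Urysohn_function_ge:
  "s \<le> 1 \<Longrightarrow> (\<And>r. r \<in> dyadics \<inter> {0..1} \<Longrightarrow> x \<in> G r \<Longrightarrow> s \<le> r) \<Longrightarrow> s \<le> Urysohn_function G x"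
  unfolding Urysohn_function_def by (rule cInf_greatest) auto

lemma Urysohn_function_nonneg: "0 \<le> Urysohn_function G x"
  by (rule Urysohn_function_ge) auto

lemma Urysohn_function_less_iff:
  "Urysohn_function G x < a \<longleftrightarrow> 1 < a \<or> (\<exists>r \<in> dyadics \<inter> {0..1}. x \<in> G r \<and> r < a)"
  unfolding Urysohn_function_def by (subst cInf_less_iff) (auto intro: bdd_belowI[of _ 0])

lemma openin_Urysohn_function_less:
  assumes opn: "\<And>r. r \<in> dyadics \<inter> {0..1} \<Longrightarrow> openin X (G r)"
  shows "openin X {x \<in> topspace X. Urysohn_function G x < a}"
proof -
  have "{x \<in> topspace X. Urysohn_function G x < a}
      = (if 1 < a then topspace X else \<Union>r \<in> {r \<in> dyadics \<inter> {0..1}. r < a}. G r)"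
    using openin_subset[OF opn] by (auto simp: Urysohn_function_less_iff)
  then show ?thesis
    using opn by auto
qed

lemma Urysohn_function_greater_eq:
  assumes opn: "\<And>r. r \<in> dyadics \<inter> {0..1} \<Longrightarrow> openin X (G r)"
    and nest: "\<And>r s. r \<in> dyadics \<inter> {0..1} \<Longrightarrow> s \<in> dyadics \<inter> {0..1} \<Longrightarrow> r < s
      \<Longrightarrow> X closure_of G r \<subseteq> G s"
    and "0 \<le> a"
  shows "{x \<in> topspace X. a < Urysohn_function G x}
    = (\<Union>s \<in> {s \<in> dyadics \<inter> {0..1}. a < s}. topspace X - X closure_of G s)"
proof (intro set_eqI iffI)
  let ?f = "Urysohn_function G" and ?D = "dyadics \<inter> {0..1::real}"
  fix x assume x: "x \<in> {x \<in> topspace X. a < ?f x}"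
  obtain s where s: "s \<in> dyadics" "a < s" "s < ?f x"
    using dyadics_dense[of a "?f x"] \<open>0 \<le> a\<close> x by auto
  obtain t where t: "t \<in> dyadics" "s < t" "t < ?f x"
    using dyadics_dense[of s "?f x"] \<open>0 \<le> a\<close> s by auto
  have D: "s \<in> ?D" "t \<in> ?D"
    using s t \<open>0 \<le> a\<close> Urysohn_function_le_1[of G x] by auto
  have "x \<notin> G t"
    using Urysohn_function_le[OF D(2)] t(3) by force
  then have "x \<notin> X closure_of G s"
    using nest[OF D t(2)] by blast
  then show "x \<in> (\<Union>s \<in> {s \<in> ?D. a < s}. topspace X - X closure_of G s)"
    using x D(1) s(2) by blast
next
  let ?f = "Urysohn_function G" and ?D = "dyadics \<inter> {0..1::real}"
  fix x assume "x \<in> (\<Union>s \<in> {s \<in> ?D. a < s}. topspace X - X closure_of G s)"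
  then obtain s where s: "s \<in> ?D" "a < s" "x \<in> topspace X" "x \<notin> X closure_of G s"
    by blast
  have "s \<le> ?f x"
  proof (rule Urysohn_function_ge)
    show "s \<le> 1"
      using s(1) by simp
    fix r assume r: "r \<in> ?D" "x \<in> G r"
    show "s \<le> r"
    proof (rule ccontr)
      assume "\<not> s \<le> r"
      then have "G r \<subseteq> X closure_of G s"
        using nest[OF r(1) s(1)] closure_of_subset[OF openin_subset[OF opn[OF r(1)]]]
          closure_of_subset[OF openin_subset[OF opn[OF s(1)]]] by simp
      then show False
        using r(2) s(4) by blast
    qed
  qed
  then show "x \<in> {x \<in> topspace X. a < ?f x}"
    using s(2,3) by simp
qed

lemma continuous_map_Urysohn_function:
  assumes opn: "\<And>r. r \<in> dyadics \<inter> {0..1} \<Longrightarrow> openin X (G r)"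
    and nest: "\<And>r s. r \<in> dyadics \<inter> {0..1} \<Longrightarrow> s \<in> dyadics \<inter> {0..1} \<Longrightarrow> r < s
      \<Longrightarrow> X closure_of G r \<subseteq> G s"
  shows "continuous_map X (top_of_set {0..1}) (Urysohn_function G)"
  unfolding continuous_map_upper_lower_semicontinuous_lt_gen
proof (intro conjI allI ballI)
  fix x show "Urysohn_function G x \<in> {0..1}"
    by (simp add: Urysohn_function_le_1 Urysohn_function_nonneg)
next
  fix a show "openin X {x \<in> topspace X. Urysohn_function G x < a}"
    using opn by (rule openin_Urysohn_function_less)
next
  fix a :: real
  show "openin X {x \<in> topspace X. a < Urysohn_function G x}"
  proof (cases "a < 0")
    case True
    then have "{x \<in> topspace X. a < Urysohn_function G x} = topspace X"
      using Urysohn_function_nonneg[of G] by (auto intro: less_le_trans)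
    then show ?thesis
      by simp
  next
    case False
    have "openin X (\<Union>s \<in> {s \<in> dyadics \<inter> {0..1}. a < s}. topspace X - X closure_of G s)"
      by (rule openin_Union) auto
    then show ?thesis
      using Urysohn_function_greater_eq[OF opn nest] False by simp
  qed
qed

lemma Urysohn_function_mono:
  "(\<And>r. r \<in> dyadics \<inter> {0..1} \<Longrightarrow> y \<in> G r \<Longrightarrow> x \<in> G r)
    \<Longrightarrow> Urysohn_function G x \<le> Urysohn_function G y"
  unfolding Urysohn_function_def by (rule cInf_superset_mono) (auto intro: bdd_belowI[of _ 0])

lemma decreasing_dyadic_family:
  assumes X: "compact_space X" "Hausdorff_space X" "T2_preordered X le"
    and U: "openin X U" "decreasing_in X le U" and W: "openin X W" "decreasing_in X le W"
    and UW: "X closure_of U \<subseteq> W"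
  obtains G :: "real \<Rightarrow> 'a set" where "G 0 = U" "G 1 = W"
    "\<And>r. r \<in> dyadics \<inter> {0..1} \<Longrightarrow> openin X (G r) \<and> decreasing_in X le (G r)"
    "\<And>r s. r \<in> dyadics \<inter> {0..1} \<Longrightarrow> s \<in> dyadics \<inter> {0..1} \<Longrightarrow> r < s \<Longrightarrow> X closure_of G r \<subseteq> G s"
proof -
  define R where "R V V' \<longleftrightarrow> openin X V \<and> decreasing_in X le V \<and> openin X V' \<and>
    decreasing_in X le V' \<and> X closure_of V \<subseteq> V'" for V V'
  have "\<exists>G :: real \<Rightarrow> _. G 0 = U \<and> G 1 = W \<and>
      (\<forall>r \<in> dyadics \<inter> {0..1}. \<forall>s \<in> dyadics \<inter> {0..1}. r < s \<longrightarrow> R (G r) (G s))"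
  proof (rule recursion_on_dyadic_fractions)
    show "R U W"
      using U W UW by (simp add: R_def)
    show "\<exists>Z. R V Z \<and> R Z V'" if "R V V'" for V V'
    proof -
      have V': "openin X V'" "decreasing_in X le V'" "X closure_of V \<subseteq> V'"
        using that by (simp_all add: R_def)
      obtain Z where "openin X Z" "decreasing_in X le Z" "X closure_of V \<subseteq> Z" "X closure_of Z \<subseteq> V'"
        by (rule open_decreasing_shrink[OF X closedin_closure_of V'])
      then show ?thesis
        using that unfolding R_def by blast
    qed
    show "R V Z" if "R V V'" "R V' Z" for V V' Z
    proof -
      have V': "openin X V'" "X closure_of V \<subseteq> V'" "X closure_of V' \<subseteq> Z"
        using that by (simp_all add: R_def)
      have "X closure_of V \<subseteq> Z"
        using V'(2) closure_of_subset[OF openin_subset[OF V'(1)]] V'(3) by (meson order_trans)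
      then show ?thesis
        using that by (simp add: R_def)
    qed
  qed
  then obtain G :: "real \<Rightarrow> 'a set" where G0: "G 0 = U" and G1: "G 1 = W"
    and GR: "\<And>r s. r \<in> dyadics \<inter> {0..1} \<Longrightarrow> s \<in> dyadics \<inter> {0..1} \<Longrightarrow> r < s \<Longrightarrow> R (G r) (G s)"
    by blast
  have "openin X (G r) \<and> decreasing_in X le (G r)" if r: "r \<in> dyadics \<inter> {0..1}" for r
  proof (cases "r = 1")
    case False
    then have "R (G r) (G 1)"
      using GR[OF r] r real_in_dyadics[of 1] by simp
    then show ?thesis
      by (simp add: R_def)
  qed (use G1 W in simp)
  moreover have "X closure_of G r \<subseteq> G s"
    if "r \<in> dyadics \<inter> {0..1}" "s \<in> dyadics \<inter> {0..1}" "r < s" for r s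
    using GR[OF that] by (simp add: R_def)
  ultimately show thesis
    using that G0 G1 by blast
qed

lemma ordered_Urysohn_lemma:
  assumes X: "compact_space X" "Hausdorff_space X" "T2_preordered X le"
    and S: "closedin X S" and T: "closedin X T" "increasing_in X le T" and "disjnt S T"
  obtains f where "f \<in> cont_iso X le" "f ` S \<subseteq> {0}" "f ` T \<subseteq> {1}"
proof -
  have cT: "openin X (topspace X - T)" "decreasing_in X le (topspace X - T)"
    using T(1) decreasing_in_Diff[OF T(2)] by auto
  have "S \<subseteq> topspace X - T"
    using \<open>disjnt S T\<close> closedin_subset[OF S] by (auto simp: disjnt_def)
  then obtain U where U: "openin X U" "decreasing_in X le U" "S \<subseteq> U" "X closure_of U \<subseteq> topspace X - T"
    using open_decreasing_shrink[OF X S cT] by blast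
  obtain G :: "real \<Rightarrow> 'a set" where G0: "G 0 = U" and G1: "G 1 = topspace X - T"
    and G: "\<And>r. r \<in> dyadics \<inter> {0..1} \<Longrightarrow> openin X (G r) \<and> decreasing_in X le (G r)"
    and nest: "\<And>r s. r \<in> dyadics \<inter> {0..1} \<Longrightarrow> s \<in> dyadics \<inter> {0..1} \<Longrightarrow> r < s \<Longrightarrow> X closure_of G r \<subseteq> G s"
    using decreasing_dyadic_family[OF X U(1,2) cT U(4)] by blast
  have one: "1 \<in> dyadics \<inter> {0..1::real}" and zero: "0 \<in> dyadics \<inter> {0..1::real}"
    using real_in_dyadics[of 1] real_in_dyadics[of 0] by auto
  have GT: "G r \<inter> T = {}" if r: "r \<in> dyadics \<inter> {0..1}" for r
  proof (cases "r = 1")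
    case False
    then have "G r \<subseteq> G 1"
      using nest[OF r one] r closure_of_subset[OF openin_subset, of X "G r"] G[OF r] by auto
    then show ?thesis
      using G1 by blast
  qed (use G1 in auto)
  let ?f = "Urysohn_function G"
  show thesis
  proof
    have "continuous_map X (top_of_set {0..1}) ?f"
      using G nest by (intro continuous_map_Urysohn_function) blast+
    moreover have "isotone X le (\<le>) ?f"
      unfolding isotone_def using G unfolding decreasing_in_def by (blast intro: Urysohn_function_mono)
    ultimately show "?f \<in> cont_iso X le"
      by (simp add: cont_iso_def)
    show "?f ` S \<subseteq> {0}"
      using Urysohn_function_le[OF zero, of _ G] Urysohn_function_nonneg[of G] G0 U(3)
      by (force intro: order_antisym)
    show "?f ` T \<subseteq> {1}"
    proof
      fix y assume "y \<in> ?f ` T"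
      then obtain t where t: "t \<in> T" "y = ?f t"
        by blast
      have "1 \<le> ?f t"
        using GT t(1) by (intro Urysohn_function_ge) auto
      then show "y \<in> {1}"
        using Urysohn_function_le_1[of G t] t(2) by simp
    qed
  qed
qed

lemma cont_iso_separation:
  assumes X: "compact_space X" "Hausdorff_space X" "T2_preordered X le"
    and p: "p \<in> topspace X" and q: "q \<in> topspace X" and "\<not> le p q"
  obtains h where "h \<in> cont_iso X le" "h q = 0" "h p = 1"
proof -
  have po: "preorder_on (topspace X) (\<lambda>x y. le y x)"
    using X(3) preorder_on_flip[of "topspace X" le] by (simp add: T2_preordered_def)
  let ?T = "up_closure X le {p}"
  have "closedin X {q}" "closedin X {p}"
    using X(2) p q by (simp_all add: Hausdorff_imp_t1_space closedin_t1_singleton)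
  moreover have "closedin X ?T"
    using closedin_down_closure[OF X(1,2) T2_preordered_converse[OF X(3)]] \<open>closedin X {p}\<close> .
  moreover have "increasing_in X le ?T"
    using decreasing_in_down_closure[OF po] p by simp
  moreover have "disjnt {q} ?T"
    using \<open>\<not> le p q\<close> by (simp add: down_closure_def)
  ultimately obtain h where "h \<in> cont_iso X le" "h ` {q} \<subseteq> {0}" "h ` ?T \<subseteq> {1}"
    using ordered_Urysohn_lemma[OF X] by metis
  moreover have "p \<in> ?T"
    using subset_down_closure[OF po] p by blast
  ultimately show thesis
    using that by blast
qed

section \<open>The quotient by the equivalence of a preorder\<close>

text \<open>Evaluation at a chosen representative; meaningful when g is constant on the class.\<close>

definition quot_lift :: "('a \<Rightarrow> 'b) \<Rightarrow> 'a set \<Rightarrow> 'b" where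
  "quot_lift g c = g (SOME x. x \<in> c)"

lemma istopology_quot_top:
  "istopology (\<lambda>U. U \<subseteq> quot_proj X le ` topspace X \<and> openin X {x \<in> topspace X. quot_proj X le x \<in> U})"
  unfolding istopology_def
proof (rule conjI; intro allI impI)
  fix S T
  assume "S \<subseteq> quot_proj X le ` topspace X \<and> openin X {x \<in> topspace X. quot_proj X le x \<in> S}"
    and "T \<subseteq> quot_proj X le ` topspace X \<and> openin X {x \<in> topspace X. quot_proj X le x \<in> T}"
  moreover have "{x \<in> topspace X. quot_proj X le x \<in> S \<inter> T}
      = {x \<in> topspace X. quot_proj X le x \<in> S} \<inter> {x \<in> topspace X. quot_proj X le x \<in> T}"
    by blast
  ultimately show "S \<inter> T \<subseteq> quot_proj X le ` topspace X \<and>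
      openin X {x \<in> topspace X. quot_proj X le x \<in> S \<inter> T}"
    by auto
next
  fix K
  assume K: "\<forall>S\<in>K. S \<subseteq> quot_proj X le ` topspace X \<and> openin X {x \<in> topspace X. quot_proj X le x \<in> S}"
  have "{x \<in> topspace X. quot_proj X le x \<in> \<Union>K} = (\<Union>S\<in>K. {x \<in> topspace X. quot_proj X le x \<in> S})"
    by blast
  then show "\<Union>K \<subseteq> quot_proj X le ` topspace X \<and> openin X {x \<in> topspace X. quot_proj X le x \<in> \<Union>K}"
    using K by auto
qed

lemma openin_quot_top:
  "openin (quot_top X le) U \<longleftrightarrow>
     U \<subseteq> quot_proj X le ` topspace X \<and> openin X {x \<in> topspace X. quot_proj X le x \<in> U}"
  unfolding quot_top_def by (simp only: topology_inverse'[OF istopology_quot_top])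

lemma topspace_quot_top: "topspace (quot_top X le) = quot_proj X le ` topspace X"
proof (rule subset_antisym)
  show "topspace (quot_top X le) \<subseteq> quot_proj X le ` topspace X"
    using openin_quot_top openin_topspace by blast
  have "{x \<in> topspace X. quot_proj X le x \<in> quot_proj X le ` topspace X} = topspace X"
    by blast
  then show "quot_proj X le ` topspace X \<subseteq> topspace (quot_top X le)"
    using openin_subset[of "quot_top X le"] by (simp add: openin_quot_top)
qed

lemma continuous_map_quot_proj: "continuous_map X (quot_top X le) (quot_proj X le)"
  by (auto simp: continuous_map_def openin_quot_top topspace_quot_top)

lemma continuous_map_from_quot_top:
  assumes "continuous_map X Z (\<lambda>x. h (quot_proj X le x))"
  shows "continuous_map (quot_top X le) Z h"
  unfolding continuous_map_def
proof (intro conjI allI impI)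
  show "h \<in> topspace (quot_top X le) \<rightarrow> topspace Z"
    using assms by (auto simp: topspace_quot_top continuous_map_def)
  fix V assume "openin Z V"
  then have "openin X {x \<in> topspace X. h (quot_proj X le x) \<in> V}"
    using assms by (simp add: continuous_map_def)
  moreover have "{x \<in> topspace X. quot_proj X le x \<in> {c \<in> topspace (quot_top X le). h c \<in> V}}
      = {x \<in> topspace X. h (quot_proj X le x) \<in> V}"
    by (auto simp: topspace_quot_top)
  ultimately show "openin (quot_top X le) {c \<in> topspace (quot_top X le). h c \<in> V}"
    by (auto simp: openin_quot_top topspace_quot_top)
qed

lemma quot_proj_self: "preorder_on (topspace X) le \<Longrightarrow> x \<in> topspace X \<Longrightarrow> x \<in> quot_proj X le x"
  by (auto simp: quot_proj_def equiv_of_def preorder_on_def)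

lemma quot_projD: "y \<in> quot_proj X le x \<Longrightarrow> y \<in> topspace X \<and> le x y \<and> le y x"
  by (simp add: quot_proj_def equiv_of_def)

lemma quot_proj_eq_iff:
  assumes po: "preorder_on (topspace X) le" and x: "x \<in> topspace X" and y: "y \<in> topspace X"
  shows "quot_proj X le x = quot_proj X le y \<longleftrightarrow> le x y \<and> le y x"
proof
  assume "quot_proj X le x = quot_proj X le y"
  then show "le x y \<and> le y x"
    using quot_projD[of x X le y] quot_proj_self[OF po x] by simp
next
  assume "le x y \<and> le y x"
  then have "le x z \<and> le z x \<longleftrightarrow> le y z \<and> le z y" if "z \<in> topspace X" for z
    using po x y that unfolding preorder_on_def by meson
  then show "quot_proj X le x = quot_proj X le y"
    by (auto simp: quot_proj_def equiv_of_def)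
qed

lemma quot_le_quot_proj_iff:
  assumes po: "preorder_on (topspace X) le" and x: "x \<in> topspace X" and y: "y \<in> topspace X"
  shows "quot_le le (quot_proj X le x) (quot_proj X le y) \<longleftrightarrow> le x y"
proof
  assume "quot_le le (quot_proj X le x) (quot_proj X le y)"
  then obtain a b where "a \<in> quot_proj X le x" "b \<in> quot_proj X le y" "le a b"
    unfolding quot_le_def by blast
  then show "le x y"
    using po x y quot_projD[of a X le x] quot_projD[of b X le y] unfolding preorder_on_def by meson
next
  assume "le x y"
  then show "quot_le le (quot_proj X le x) (quot_proj X le y)"
    unfolding quot_le_def using quot_proj_self[OF po x] quot_proj_self[OF po y] by blast
qed

lemma quot_lift_quot_proj:
  assumes po: "preorder_on (topspace X) le" and x: "x \<in> topspace X"
    and g: "\<And>y. y \<in> topspace X \<Longrightarrow> le x y \<Longrightarrow> le y x \<Longrightarrow> g y = g x"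
  shows "quot_lift g (quot_proj X le x) = g x"
proof -
  define z where "z = (SOME y. y \<in> quot_proj X le x)"
  have "z \<in> quot_proj X le x"
    unfolding z_def using quot_proj_self[OF po x] by (rule someI)
  then have "z \<in> topspace X \<and> le x z \<and> le z x"
    by (rule quot_projD)
  then have "g z = g x"
    by (intro g) auto
  then show ?thesis
    by (simp add: quot_lift_def flip: z_def)
qed

lemma continuous_map_quot_lift:
  assumes po: "preorder_on (topspace X) le" and g: "continuous_map X Z g"
    and const: "\<And>x y. x \<in> topspace X \<Longrightarrow> y \<in> topspace X \<Longrightarrow> le x y \<Longrightarrow> le y x \<Longrightarrow> g y = g x"
  shows "continuous_map (quot_top X le) Z (quot_lift g)"
proof (rule continuous_map_from_quot_top, rule continuous_map_eq[OF g])
  fix x assume x: "x \<in> topspace X"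
  show "g x = quot_lift g (quot_proj X le x)"
    using quot_lift_quot_proj[OF po x, of g] const[OF x] by simp
qed

section \<open>Families of real-valued functions\<close>

lemma embedding_map_by_preimages:
  assumes f: "continuous_map X Y f" "inj_on f (topspace X)"
    and pre: "\<And>W. openin X W \<Longrightarrow> \<exists>V. openin Y V \<and> W = {x \<in> topspace X. f x \<in> V}"
  shows "embedding_map X Y f"
  unfolding embedding_map_def homeomorphic_map_def quotient_map_def
proof (intro conjI allI impI)
  show "f ` topspace X = topspace (subtopology Y (f ` topspace X))"
    using f(1) continuous_map_image_subset_topspace by fastforce
  show "inj_on f (topspace X)"
    by (fact f(2))
  fix U assume "U \<subseteq> topspace (subtopology Y (f ` topspace X))"
  then have U: "U \<subseteq> f ` topspace X"
    by auto
  show "openin X {x \<in> topspace X. f x \<in> U} = openin (subtopology Y (f ` topspace X)) U"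
  proof
    assume "openin X {x \<in> topspace X. f x \<in> U}"
    then obtain V where "openin Y V" "{x \<in> topspace X. f x \<in> U} = {x \<in> topspace X. f x \<in> V}"
      using pre by blast
    moreover from this(2) U have "U = f ` topspace X \<inter> V"
      by blast
    ultimately show "openin (subtopology Y (f ` topspace X)) U"
      by (auto simp: openin_subtopology)
  next
    assume "openin (subtopology Y (f ` topspace X)) U"
    then obtain V where "openin Y V" "U = V \<inter> f ` topspace X"
      by (auto simp: openin_subtopology)
    moreover from this(2) have "{x \<in> topspace X. f x \<in> U} = {x \<in> topspace X. f x \<in> V}"
      by blast
    ultimately show "openin X {x \<in> topspace X. f x \<in> U}"
      using f(1) by (simp add: continuous_map_def)
  qed
qed

lemma generate_topology_on_preimage:
  assumes "generate_topology_on S W"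
    and basis: "\<And>s. s \<in> S \<Longrightarrow> \<exists>V. openin Y V \<and> s \<inter> T = {x \<in> T. f x \<in> V}"
  shows "\<exists>V. openin Y V \<and> W \<inter> T = {x \<in> T. f x \<in> V}"
  using assms(1)
proof (induction rule: generate_topology_on.induct)
  case Empty
  show ?case
    by (intro exI[of _ "{}"]) auto
next
  case (Int a b)
  then obtain Va Vb where "openin Y Va" "a \<inter> T = {x \<in> T. f x \<in> Va}"
    "openin Y Vb" "b \<inter> T = {x \<in> T. f x \<in> Vb}"
    by blast
  then show ?case
    by (intro exI[of _ "Va \<inter> Vb"]) auto
next
  case (UN K)
  then obtain V where V: "\<And>k. k \<in> K \<Longrightarrow> openin Y (V k) \<and> k \<inter> T = {x \<in> T. f x \<in> V k}"
    by metis
  then have "\<Union>K \<inter> T = {x \<in> T. f x \<in> (\<Union>k\<in>K. V k)}"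
    by blast
  moreover have "openin Y (\<Union>k\<in>K. V k)"
    using V by blast
  ultimately show ?case
    by blast
next
  case (Basis s)
  then show ?case
    by (rule basis)
qed

lemma embedding_map_into_generated:
  assumes X: "X = topology_generated_by S"
    and f: "continuous_map X Y f" "inj_on f (topspace X)"
    and basis: "\<And>s. s \<in> S \<Longrightarrow> \<exists>V. openin Y V \<and> s \<inter> topspace X = {x \<in> topspace X. f x \<in> V}"
  shows "embedding_map X Y f"
proof (rule embedding_map_by_preimages[OF f])
  fix W assume W: "openin X W"
  then have "openin (topology_generated_by S) W"
    by (simp only: X)
  then have "generate_topology_on S W"
    by (rule openin_topology_generated_by)
  then obtain V where "openin Y V" "W \<inter> topspace X = {x \<in> topspace X. f x \<in> V}"
    using generate_topology_on_preimage[OF _ basis] by blast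
  moreover have "W \<inter> topspace X = W"
    using openin_subset[OF W] by blast
  ultimately show "\<exists>V. openin Y V \<and> W = {x \<in> topspace X. f x \<in> V}"
    by auto
qed

lemma Hausdorff_space_separating_functions:
  assumes cont: "\<And>i. i \<in> I \<Longrightarrow> continuous_map Y euclideanreal (\<phi> i)"
    and sep: "\<And>d e. d \<in> topspace Y \<Longrightarrow> e \<in> topspace Y \<Longrightarrow> d \<noteq> e \<Longrightarrow> \<exists>i\<in>I. \<phi> i d \<noteq> \<phi> i e"
  shows "Hausdorff_space Y"
  unfolding Hausdorff_space_def
proof (intro allI impI)
  fix d e assume de: "d \<in> topspace Y \<and> e \<in> topspace Y \<and> d \<noteq> e"
  then obtain i where i: "i \<in> I" "\<phi> i d \<noteq> \<phi> i e"
    using sep by blast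
  have opn: "openin Y {x \<in> topspace Y. \<phi> i x \<in> A}" if "open A" for A
    using openin_continuous_map_preimage[OF cont[OF i(1)]] that by simp
  have "\<exists>A B. open A \<and> open B \<and> \<phi> i d \<in> A \<and> \<phi> i e \<in> B \<and> A \<inter> B = {}"
    using i(2) hausdorff by blast
  then obtain A B where "open A" "open B" "\<phi> i d \<in> A" "\<phi> i e \<in> B" "A \<inter> B = {}"
    by blast
  then show "\<exists>U V. openin Y U \<and> openin Y V \<and> d \<in> U \<and> e \<in> V \<and> disjnt U V"
    using opn de by (intro exI[of _ "{x \<in> topspace Y. \<phi> i x \<in> A}"] exI[of _ "{x \<in> topspace Y. \<phi> i x \<in> B}"])
      (auto simp: disjnt_def)
qed

lemma closedin_graph_rel_functions:
  assumes cont: "\<And>i. i \<in> I \<Longrightarrow> continuous_map Y euclideanreal (\<phi> i)"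
    and R: "\<And>d e. d \<in> topspace Y \<Longrightarrow> e \<in> topspace Y \<Longrightarrow> R d e \<longleftrightarrow> (\<forall>i\<in>I. \<phi> i d \<le> \<phi> i e)"
  shows "closedin (prod_topology Y Y) (graph_rel Y R)"
proof -
  have eq: "graph_rel Y R = topspace (prod_topology Y Y) \<inter>
      (\<Inter>i\<in>I. {z \<in> topspace (prod_topology Y Y). \<phi> i (fst z) \<le> \<phi> i (snd z)})"
    using R by (auto simp: graph_rel_def)
  have cl: "closedin (prod_topology Y Y) {z \<in> topspace (prod_topology Y Y). \<phi> i (fst z) \<le> \<phi> i (snd z)}"
    if "i \<in> I" for i
  proof -
    have "continuous_map (prod_topology Y Y) euclideanreal (\<lambda>z. \<phi> i (snd z) - \<phi> i (fst z))"
      using continuous_map_compose[OF continuous_map_snd cont[OF that]]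
        continuous_map_compose[OF continuous_map_fst cont[OF that]]
      by (intro continuous_map_diff) (simp_all add: o_def)
    from closedin_continuous_map_preimage[OF this, of "{0..}"] show ?thesis
      by simp
  qed
  show ?thesis
    unfolding eq
  proof (cases "I = {}")
    case True
    then show "closedin (prod_topology Y Y) (topspace (prod_topology Y Y) \<inter>
        (\<Inter>i\<in>I. {z \<in> topspace (prod_topology Y Y). \<phi> i (fst z) \<le> \<phi> i (snd z)}))"
      by (simp only: INT_empty Int_UNIV_right closedin_topspace)
  qed (intro closedin_Int closedin_topspace closedin_INT cl)
qed

lemma compactin_uniform_separation:
  assumes K: "compactin Y K"
    and cont: "\<And>i. i \<in> I \<Longrightarrow> continuous_map Y euclideanreal (\<phi> i)"
    and sep: "\<And>e. e \<in> K \<Longrightarrow> \<exists>i\<in>I. \<phi> i e \<noteq> a i"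
  shows "\<exists>J \<epsilon>. finite J \<and> J \<subseteq> I \<and> \<epsilon> > 0 \<and> (\<forall>e\<in>K. \<exists>i\<in>J. \<epsilon> \<le> \<bar>\<phi> i e - a i\<bar>)"
proof -
  define B where "B i n = {x \<in> topspace Y. 1 / real (Suc n) < \<bar>\<phi> i x - a i\<bar>}" for i n
  have opn: "openin Y (B i n)" if "i \<in> I" for i n
  proof -
    have "continuous_map Y euclideanreal (\<lambda>x. \<bar>\<phi> i x - a i\<bar>)"
      using cont[OF that] by (intro continuous_map_real_abs continuous_map_diff) auto
    from openin_continuous_map_preimage[OF this, of "{1 / real (Suc n)<..}"] show ?thesis
      by (simp add: B_def)
  qed
  have cov: "K \<subseteq> (\<Union>(i, n) \<in> I \<times> UNIV. B i n)"
  proof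
    fix e assume e: "e \<in> K"
    then obtain i where "i \<in> I" "0 < \<bar>\<phi> i e - a i\<bar>"
      using sep by fastforce
    moreover obtain n where "1 / real (Suc n) < \<bar>\<phi> i e - a i\<bar>"
      using nat_approx_posE calculation(2) by metis
    moreover have "e \<in> topspace Y"
      using e compactin_subset_topspace[OF K] by blast
    ultimately have "(i, n) \<in> I \<times> UNIV" "e \<in> B i n"
      by (simp_all add: B_def)
    then show "e \<in> (\<Union>(i, n) \<in> I \<times> UNIV. B i n)"
      by blast
  qed
  have "\<forall>V \<in> (\<lambda>(i, n). B i n) ` (I \<times> UNIV). openin Y V"
    using opn by auto
  then obtain F where "finite F" "F \<subseteq> (\<lambda>(i, n). B i n) ` (I \<times> UNIV)" "K \<subseteq> \<Union>F"
    using K cov unfolding compactin_def by blast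
  then obtain P where P: "finite P" "P \<subseteq> I \<times> UNIV" "K \<subseteq> (\<Union>(i, n) \<in> P. B i n)"
    using finite_subset_image by metis
  define n0 where "n0 = Max (snd ` P)"
  show ?thesis
  proof (intro exI conjI ballI)
    show "finite (fst ` P)" "fst ` P \<subseteq> I" "0 < 1 / real (Suc n0)"
      using P by auto
    fix e assume "e \<in> K"
    then obtain i n where "(i, n) \<in> P" "1 / real (Suc n) < \<bar>\<phi> i e - a i\<bar>"
      using P(3) by (auto simp: B_def)
    moreover from this(1) have "1 / real (Suc n0) \<le> 1 / real (Suc n)"
      using P(1) by (auto simp: n0_def image_iff intro!: divide_left_mono Max_ge bexI[of _ "(i, n)"])
    ultimately show "\<exists>i\<in>fst ` P. 1 / real (Suc n0) \<le> \<bar>\<phi> i e - a i\<bar>"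
      by force
  qed
qed

lemma openin_near_finitely_many:
  assumes "finite J" "\<And>i. i \<in> J \<Longrightarrow> continuous_map X euclideanreal (\<psi> i)"
  shows "openin X {q \<in> topspace X. \<forall>i\<in>J. \<bar>\<psi> i q - a i\<bar> < \<epsilon>}"
  using assms
proof (induction J rule: finite_induct)
  case (insert i J)
  have "continuous_map X euclideanreal (\<lambda>q. \<bar>\<psi> i q - a i\<bar>)"
    using insert.prems by (intro continuous_map_real_abs continuous_map_diff) auto
  from openin_continuous_map_preimage[OF this, of "{..<\<epsilon>}"]
  have "openin X {q \<in> topspace X. \<bar>\<psi> i q - a i\<bar> < \<epsilon>}"
    by simp
  moreover have "openin X {q \<in> topspace X. \<forall>i\<in>J. \<bar>\<psi> i q - a i\<bar> < \<epsilon>}"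
    using insert by auto
  moreover have "{q \<in> topspace X. \<forall>i'\<in>insert i J. \<bar>\<psi> i' q - a i'\<bar> < \<epsilon>}
    = {q \<in> topspace X. \<bar>\<psi> i q - a i\<bar> < \<epsilon>} \<inter> {q \<in> topspace X. \<forall>i\<in>J. \<bar>\<psi> i q - a i\<bar> < \<epsilon>}"
    by auto
  ultimately show ?case
    by (simp only: openin_Int)
qed simp

text \<open>A compact space Y with a point-separating family \<phi> is the closure of its image in the product
  of real lines; so any prescription of values that can be approximated on finitely many coordinates
  is realized by a point of Y, and maps into Y may be checked coordinatewise.\<close>

lemma compact_space_realizes_values:
  assumes Y: "compact_space Y" and cont: "\<And>i. i \<in> I \<Longrightarrow> continuous_map Y euclideanreal (\<phi> i)"
    and approx: "\<And>J \<epsilon>. finite J \<Longrightarrow> J \<subseteq> I \<Longrightarrow> 0 < \<epsilon> \<Longrightarrow> \<exists>d\<in>topspace Y. \<forall>i\<in>J. \<bar>\<phi> i d - a i\<bar> < \<epsilon>"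
  shows "\<exists>d\<in>topspace Y. \<forall>i\<in>I. \<phi> i d = a i"
proof (rule ccontr)
  assume "\<not> ?thesis"
  then have sep: "\<exists>i\<in>I. \<phi> i e \<noteq> a i" if "e \<in> topspace Y" for e
    using that by blast
  have "compactin Y (topspace Y)"
    using Y by (simp add: compact_space_def)
  then have "\<exists>J \<epsilon>. finite J \<and> J \<subseteq> I \<and> \<epsilon> > 0 \<and> (\<forall>e\<in>topspace Y. \<exists>i\<in>J. \<epsilon> \<le> \<bar>\<phi> i e - a i\<bar>)"
    by (rule compactin_uniform_separation[OF _ cont sep])
  then obtain J \<epsilon> where "finite J" "J \<subseteq> I" "0 < \<epsilon>"
    and far: "\<forall>e\<in>topspace Y. \<exists>i\<in>J. \<epsilon> \<le> \<bar>\<phi> i e - a i\<bar>"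
    by blast
  then obtain d where "d \<in> topspace Y" "\<forall>i\<in>J. \<bar>\<phi> i d - a i\<bar> < \<epsilon>"
    using approx by meson
  then show False
    using far by fastforce
qed

lemma continuous_map_into_separated:
  assumes Y: "compact_space Y" and cont: "\<And>i. i \<in> I \<Longrightarrow> continuous_map Y euclideanreal (\<phi> i)"
    and sep: "\<And>d e. d \<in> topspace Y \<Longrightarrow> e \<in> topspace Y \<Longrightarrow> (\<forall>i\<in>I. \<phi> i d = \<phi> i e) \<Longrightarrow> d = e"
    and contN: "\<And>i. i \<in> I \<Longrightarrow> continuous_map N euclideanreal (\<psi> i)"
    and C: "\<And>p. p \<in> topspace N \<Longrightarrow> C p \<in> topspace Y"
    and coord: "\<And>p i. p \<in> topspace N \<Longrightarrow> i \<in> I \<Longrightarrow> \<phi> i (C p) = \<psi> i p"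
  shows "continuous_map N Y C"
  unfolding continuous_map_def
proof (intro conjI allI impI)
  show "C \<in> topspace N \<rightarrow> topspace Y"
    using C by blast
  fix V assume V: "openin Y V"
  show "openin N {p \<in> topspace N. C p \<in> V}"
  proof (subst openin_subopen, intro ballI)
    fix p assume "p \<in> {p \<in> topspace N. C p \<in> V}"
    then have p: "p \<in> topspace N" "C p \<in> V"
      by auto
    have far_p: "\<exists>i\<in>I. \<phi> i e \<noteq> \<psi> i p" if "e \<in> topspace Y - V" for e
      using sep[of e "C p"] coord[OF p(1)] C[OF p(1)] p(2) that by auto
    have "compactin Y (topspace Y - V)"
      using V by (intro closedin_compact_space[OF Y]) blast
    then have "\<exists>J \<epsilon>. finite J \<and> J \<subseteq> I \<and> \<epsilon> > 0 \<and>
        (\<forall>e\<in>topspace Y - V. \<exists>i\<in>J. \<epsilon> \<le> \<bar>\<phi> i e - \<psi> i p\<bar>)"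
      by (rule compactin_uniform_separation[OF _ cont far_p])
    then obtain J \<epsilon> where J: "finite J" "J \<subseteq> I" "\<epsilon> > 0"
      and far: "\<forall>e\<in>topspace Y - V. \<exists>i\<in>J. \<epsilon> \<le> \<bar>\<phi> i e - \<psi> i p\<bar>"
      by blast
    let ?W = "{q \<in> topspace N. \<forall>i\<in>J. \<bar>\<psi> i q - \<psi> i p\<bar> < \<epsilon>}"
    have "openin N ?W"
      using J contN by (intro openin_near_finitely_many) auto
    moreover have "?W \<subseteq> {p \<in> topspace N. C p \<in> V}"
    proof
      fix q assume q: "q \<in> ?W"
      have "C q \<in> V"
      proof (rule ccontr)
        assume "C q \<notin> V"
        then obtain i where "i \<in> J" "\<epsilon> \<le> \<bar>\<phi> i (C q) - \<psi> i p\<bar>"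
          using far C q by blast
        then show False
          using q coord J(2) by fastforce
      qed
      then show "q \<in> {p \<in> topspace N. C p \<in> V}"
        using q by blast
    qed
    ultimately show "\<exists>T. openin N T \<and> p \<in> T \<and> T \<subseteq> {p \<in> topspace N. C p \<in> V}"
      using p J(3) by auto
  qed
qed

section \<open>The quotient of the Stone-Cech compactification\<close>

locale preordered_stone_cech =
  fixes E :: "'a topology" and le :: "'a \<Rightarrow> 'a \<Rightarrow> bool" and B :: "'b topology" and \<beta> :: "'a \<Rightarrow> 'b"
  assumes T2: "T2_preordered E le"
    and cro: "completely_regularly_ordered (quot_top E le) (quot_le le)"
    and sc: "stone_cech E B \<beta>"
begin

abbreviation "leB \<equiv> beta_le E le B \<beta>"
abbreviation "QE \<equiv> quot_top E le"
abbreviation "QB \<equiv> quot_top B leB"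
abbreviation "proj \<equiv> quot_proj E le"
abbreviation "Proj \<equiv> quot_proj B leB"

text \<open>phi is the paper's \<Pi> \<circ> \<beta> \<circ> \<pi>^-1, and extensions the family of the extensions
  f~ to \<beta>E of the continuous isotone f on E.\<close>

abbreviation "phi \<equiv> quot_lift (\<lambda>x. Proj (\<beta> x))"

definition extensions :: "('b \<Rightarrow> real) set" where
  "extensions = {g. continuous_map B unit_interval g \<and> (\<exists>f\<in>cont_iso E le. \<forall>z\<in>topspace E. g (\<beta> z) = f z)}"

lemma preorder_E: "preorder_on (topspace E) le"
  using T2 by (simp add: T2_preordered_def)

lemma beta_le_iff: "leB x y \<longleftrightarrow> (\<forall>g\<in>extensions. g x \<le> g y)"
  unfolding beta_le_def extensions_def by blast

lemma preorder_beta_le: "preorder_on S leB"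
  unfolding preorder_on_def beta_le_iff by (meson order_trans order_refl)

lemma extension_exists: "f \<in> cont_iso E le \<Longrightarrow> \<exists>g\<in>extensions. \<forall>z\<in>topspace E. g (\<beta> z) = f z"
  using sc unfolding stone_cech_def extensions_def cont_iso_def by blast

lemma continuous_map_beta: "continuous_map E B \<beta>"
  using sc unfolding stone_cech_def embedding_map_def
  by (metis homeomorphic_imp_continuous_map continuous_map_in_subtopology)

lemma beta_in_topspace: "x \<in> topspace E \<Longrightarrow> \<beta> x \<in> topspace B"
  using continuous_map_image_subset_topspace[OF continuous_map_beta] by blast

lemma continuous_map_extension: "g \<in> extensions \<Longrightarrow> continuous_map B unit_interval g"
  by (simp add: extensions_def)

lemma cont_iso_lift: "f \<in> cont_iso QE (quot_le le) \<Longrightarrow> (\<lambda>x. f (proj x)) \<in> cont_iso E le"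
  unfolding cont_iso_def isotone_def
proof (intro CollectI conjI ballI impI)
  assume f: "f \<in> {f. continuous_map QE unit_interval f \<and>
      (\<forall>x\<in>topspace QE. \<forall>y\<in>topspace QE. quot_le le x y \<longrightarrow> f x \<le> f y)}"
  show "continuous_map E unit_interval (\<lambda>x. f (proj x))"
    using continuous_map_compose[OF continuous_map_quot_proj, of E le unit_interval f] f by (simp add: o_def)
  fix x y assume "x \<in> topspace E" "y \<in> topspace E" "le x y"
  then show "f (proj x) \<le> f (proj y)"
    using f quot_le_quot_proj_iff[OF preorder_E] by (auto simp: topspace_quot_top)
qed

lemma le_iff_cont_iso:
  assumes x: "x \<in> topspace E" and y: "y \<in> topspace E"
  shows "le x y \<longleftrightarrow> (\<forall>f\<in>cont_iso E le. f x \<le> f y)"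
proof
  show "le x y \<Longrightarrow> \<forall>f\<in>cont_iso E le. f x \<le> f y"
    using x y by (simp add: cont_iso_def isotone_def)
next
  assume "\<forall>f\<in>cont_iso E le. f x \<le> f y"
  then have "\<forall>f\<in>cont_iso QE (quot_le le). f (proj x) \<le> f (proj y)"
    using cont_iso_lift by fastforce
  moreover have "proj x \<in> topspace QE" "proj y \<in> topspace QE"
    using x y by (simp_all add: topspace_quot_top)
  ultimately have "quot_le le (proj x) (proj y)"
    using cro unfolding completely_regularly_ordered_def by blast
  then show "le x y"
    using quot_le_quot_proj_iff[OF preorder_E x y] by simp
qed

lemma beta_le_beta_iff:
  assumes x: "x \<in> topspace E" and y: "y \<in> topspace E"
  shows "leB (\<beta> x) (\<beta> y) \<longleftrightarrow> le x y"
proof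
  assume "leB (\<beta> x) (\<beta> y)"
  then have "f x \<le> f y" if "f \<in> cont_iso E le" for f
    using extension_exists[OF that] x y unfolding beta_le_iff by metis
  then show "le x y"
    using le_iff_cont_iso[OF x y] by blast
qed (use x y in \<open>auto simp: beta_le_iff extensions_def cont_iso_def isotone_def\<close>)

lemma extension_const: "g \<in> extensions \<Longrightarrow> leB x y \<Longrightarrow> leB y x \<Longrightarrow> g y = g x"
  unfolding beta_le_iff by (meson order_antisym)

lemma quot_lift_extension: "g \<in> extensions \<Longrightarrow> x \<in> topspace B \<Longrightarrow> quot_lift g (Proj x) = g x"
  by (rule quot_lift_quot_proj[OF preorder_beta_le]) (auto intro: extension_const)

lemma continuous_map_quot_lift_extension:
  assumes "g \<in> extensions"
  shows "continuous_map QB unit_interval (quot_lift g)"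
  by (rule continuous_map_quot_lift[OF preorder_beta_le continuous_map_extension[OF assms]])
    (rule extension_const[OF assms])

lemma continuous_map_quot_lift_extension_real:
  "g \<in> extensions \<Longrightarrow> continuous_map QB euclideanreal (quot_lift g)"
  using continuous_map_quot_lift_extension continuous_map_in_subtopology by blast

lemma quot_le_QB_iff:
  assumes "d \<in> topspace QB" "e \<in> topspace QB"
  shows "quot_le leB d e \<longleftrightarrow> (\<forall>g\<in>extensions. quot_lift g d \<le> quot_lift g e)"
  using assms quot_le_quot_proj_iff[OF preorder_beta_le] quot_lift_extension beta_le_iff
  by (auto simp: topspace_quot_top)

lemma QB_eqI:
  assumes d: "d \<in> topspace QB" and e: "e \<in> topspace QB"
    and eq: "\<forall>g\<in>extensions. quot_lift g d = quot_lift g e"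
  shows "d = e"
proof -
  obtain x y where "x \<in> topspace B" "y \<in> topspace B" "d = Proj x" "e = Proj y"
    using d e by (auto simp: topspace_quot_top)
  moreover from this have "leB x y" "leB y x"
    using eq quot_lift_extension by (auto simp: beta_le_iff)
  ultimately show ?thesis
    using quot_proj_eq_iff[OF preorder_beta_le] by simp
qed

lemma phi_proj: "x \<in> topspace E \<Longrightarrow> phi (proj x) = Proj (\<beta> x)"
  by (rule quot_lift_quot_proj[OF preorder_E])
    (auto simp: quot_proj_eq_iff[OF preorder_beta_le] beta_in_topspace beta_le_beta_iff)

lemma quot_lift_extension_phi:
  "g \<in> extensions \<Longrightarrow> x \<in> topspace E \<Longrightarrow> quot_lift g (phi (proj x)) = g (\<beta> x)"
  by (simp add: phi_proj quot_lift_extension beta_in_topspace)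

lemma continuous_map_phi: "continuous_map QE QB phi"
proof (rule continuous_map_from_quot_top)
  have "continuous_map E QB (\<lambda>x. Proj (\<beta> x))"
    using continuous_map_compose[OF continuous_map_beta continuous_map_quot_proj] by (simp add: o_def)
  then show "continuous_map E QB (\<lambda>x. phi (proj x))"
    by (rule continuous_map_eq) (simp add: phi_proj)
qed

lemma phi_in_topspace: "c \<in> topspace QE \<Longrightarrow> phi c \<in> topspace QB"
  using continuous_map_image_subset_topspace[OF continuous_map_phi] by blast

lemma quot_le_phi_iff:
  assumes "c \<in> topspace QE" "c' \<in> topspace QE"
  shows "quot_le leB (phi c) (phi c') \<longleftrightarrow> quot_le le c c'"
proof -
  obtain x y where "x \<in> topspace E" "y \<in> topspace E" "c = proj x" "c' = proj y"
    using assms by (auto simp: topspace_quot_top)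
  then show ?thesis
    by (simp add: phi_proj beta_in_topspace beta_le_beta_iff
        quot_le_quot_proj_iff[OF preorder_beta_le] quot_le_quot_proj_iff[OF preorder_E])
qed

lemma inj_on_phi: "inj_on phi (topspace QE)"
proof (rule inj_onI)
  fix c c' assume c: "c \<in> topspace QE" "c' \<in> topspace QE" and "phi c = phi c'"
  then have "quot_le le c c'" "quot_le le c' c"
    using quot_le_phi_iff quot_le_QB_iff phi_in_topspace by (metis order_refl)+
  then show "c = c'"
    using cro c unfolding completely_regularly_ordered_def partial_order_on_def by blast
qed

text \<open>The topology of E/~ is generated by its continuous isotone functions, and each of them
  factors through phi: this is what makes phi an embedding.\<close>

lemma embedding_map_phi: "embedding_map QE QB phi"
proof (rule embedding_map_into_generated[OF _ continuous_map_phi inj_on_phi])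
  show "QE = topology_generated_by
      {{x \<in> topspace QE. f x \<in> U} | f U. f \<in> cont_iso QE (quot_le le) \<and> openin unit_interval U}"
    using cro by (simp add: completely_regularly_ordered_def)
  fix s assume "s \<in> {{x \<in> topspace QE. f x \<in> U} | f U. f \<in> cont_iso QE (quot_le le) \<and> openin unit_interval U}"
  then obtain f U where s: "s = {x \<in> topspace QE. f x \<in> U}" and f: "f \<in> cont_iso QE (quot_le le)"
    and U: "openin unit_interval U"
    by blast
  obtain g where g: "g \<in> extensions" "\<forall>z\<in>topspace E. g (\<beta> z) = f (proj z)"
    using extension_exists[OF cont_iso_lift[OF f]] by blast
  have "openin QB {d \<in> topspace QB. quot_lift g d \<in> U}"
    using continuous_map_quot_lift_extension[OF g(1)] U by (rule openin_continuous_map_preimage)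
  moreover have "s \<inter> topspace QE = {c \<in> topspace QE. phi c \<in> {d \<in> topspace QB. quot_lift g d \<in> U}}"
    using g quot_lift_extension_phi phi_in_topspace by (auto simp: s topspace_quot_top)
  ultimately show "\<exists>V. openin QB V \<and> s \<inter> topspace QE = {c \<in> topspace QE. phi c \<in> V}"
    by blast
qed

lemma compact_space_QB: "compact_space QB"
proof -
  have "compactin B (topspace B)"
    using sc by (simp add: stone_cech_def compact_space_def)
  then have "compactin QB (Proj ` topspace B)"
    using continuous_map_quot_proj by (rule image_compactin)
  then show ?thesis
    by (simp add: compact_space_def topspace_quot_top)
qed

lemma Hausdorff_space_QB: "Hausdorff_space QB"
proof (rule Hausdorff_space_separating_functions[where \<phi> = quot_lift and I = extensions])
  show "\<exists>g\<in>extensions. quot_lift g d \<noteq> quot_lift g e"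
    if "d \<in> topspace QB" "e \<in> topspace QB" "d \<noteq> e" for d e
    using QB_eqI that by blast
qed (rule continuous_map_quot_lift_extension_real)

lemma preorder_quot_le_QB: "preorder_on (topspace QB) (quot_le leB)"
  unfolding preorder_on_def by (auto simp: quot_le_QB_iff intro: order_trans)

lemma T2_ordered_QB: "T2_ordered QB (quot_le leB)"
  unfolding T2_ordered_def T2_preordered_def partial_order_on_def
proof (intro conjI ballI impI preorder_quot_le_QB)
  show "closedin (prod_topology QB QB) (graph_rel QB (quot_le leB))"
    using continuous_map_quot_lift_extension_real quot_le_QB_iff by (rule closedin_graph_rel_functions)
  fix d e assume "d \<in> topspace QB" "e \<in> topspace QB" "quot_le leB d e" "quot_le leB e d"
  then show "d = e"
    by (intro QB_eqI) (auto simp: quot_le_QB_iff intro: order_antisym)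
qed

lemma dense_phi_image: "QB closure_of (phi ` topspace QE) = topspace QB"
proof -
  have "phi ` topspace QE = Proj ` \<beta> ` topspace E"
    by (force simp: topspace_quot_top phi_proj)
  moreover have "Proj ` (B closure_of (\<beta> ` topspace E)) \<subseteq> QB closure_of (Proj ` \<beta> ` topspace E)"
    by (rule continuous_map_image_closure_subset[OF continuous_map_quot_proj])
  moreover have "B closure_of (\<beta> ` topspace E) = topspace B"
    using sc by (simp add: stone_cech_def)
  ultimately have "topspace QB \<subseteq> QB closure_of (phi ` topspace QE)"
    by (simp add: topspace_quot_top)
  then show ?thesis
    by (meson closure_of_subset_topspace subset_antisym)
qed

lemma order_compactification_phi: "order_compactification QE (quot_le le) QB (quot_le leB) phi"
  unfolding order_compactification_def preorder_embedding_def isotone_def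
  using continuous_map_phi inj_on_phi embedding_map_phi quot_le_phi_iff dense_phi_image
    compact_space_QB Hausdorff_space_QB T2_ordered_QB
  by blast

end

section \<open>Comparison with a Nachbin compactification\<close>

locale preordered_stone_cech_nachbin = preordered_stone_cech E le B \<beta>
  for E :: "'a topology" and le :: "'a \<Rightarrow> 'a \<Rightarrow> bool" and B :: "'b topology" and \<beta> :: "'a \<Rightarrow> 'b" +
  fixes N :: "'c topology" and leN :: "'c \<Rightarrow> 'c \<Rightarrow> bool" and n :: "'a set \<Rightarrow> 'c"
  assumes nachbin: "nachbin_compactification (quot_top E le) (quot_le le) N leN n"
begin

lemma nachbin_compactification_n:
  shows continuous_map_n: "continuous_map QE N n" and isotone_n: "isotone QE (quot_le le) leN n"
    and dense_n_image: "N closure_of (n ` topspace QE) = topspace N"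
    and compact_space_N: "compact_space N" and Hausdorff_space_N: "Hausdorff_space N"
    and T2_ordered_N: "T2_ordered N leN"
  using nachbin unfolding nachbin_compactification_def order_compactification_def preorder_embedding_def
  by auto

lemma n_in_topspace: "c \<in> topspace QE \<Longrightarrow> n c \<in> topspace N"
  using continuous_map_image_subset_topspace[OF continuous_map_n] by blast

lemma cont_iso_extension_phi: "g \<in> extensions \<Longrightarrow> (\<lambda>c. quot_lift g (phi c)) \<in> cont_iso QE (quot_le le)"
  unfolding cont_iso_def isotone_def
proof (intro CollectI conjI ballI impI)
  assume g: "g \<in> extensions"
  show "continuous_map QE unit_interval (\<lambda>c. quot_lift g (phi c))"
    using continuous_map_compose[OF continuous_map_phi continuous_map_quot_lift_extension[OF g]]
    by (simp add: o_def)
  fix c c' assume c: "c \<in> topspace QE" "c' \<in> topspace QE" and "quot_le le c c'"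
  then have "quot_le leB (phi c) (phi c')"
    by (simp add: quot_le_phi_iff)
  then show "quot_lift g (phi c) \<le> quot_lift g (phi c')"
    using g quot_le_QB_iff[OF phi_in_topspace[OF c(1)] phi_in_topspace[OF c(2)]] by blast
qed

definition nachbin_ext :: "('b \<Rightarrow> real) \<Rightarrow> 'c \<Rightarrow> real" where
  "nachbin_ext g = (SOME h. h \<in> cont_iso N leN \<and> (\<forall>c\<in>topspace QE. h (n c) = quot_lift g (phi c)))"

lemma nachbin_ext:
  assumes "g \<in> extensions"
  shows "nachbin_ext g \<in> cont_iso N leN" "\<And>c. c \<in> topspace QE \<Longrightarrow> nachbin_ext g (n c) = quot_lift g (phi c)"
proof -
  have "\<forall>f\<in>cont_iso QE (quot_le le). \<exists>h\<in>cont_iso N leN. \<forall>c\<in>topspace QE. h (n c) = f c"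
    using nachbin by (simp add: nachbin_compactification_def)
  from bspec[OF this cont_iso_extension_phi[OF assms]]
  have "\<exists>h. h \<in> cont_iso N leN \<and> (\<forall>c\<in>topspace QE. h (n c) = quot_lift g (phi c))"
    by blast
  then have "nachbin_ext g \<in> cont_iso N leN \<and> (\<forall>c\<in>topspace QE. nachbin_ext g (n c) = quot_lift g (phi c))"
    unfolding nachbin_ext_def by (rule someI_ex)
  then show "nachbin_ext g \<in> cont_iso N leN" "\<And>c. c \<in> topspace QE \<Longrightarrow> nachbin_ext g (n c) = quot_lift g (phi c)"
    by auto
qed

lemma continuous_map_nachbin_ext: "g \<in> extensions \<Longrightarrow> continuous_map N euclideanreal (nachbin_ext g)"
  using nachbin_ext(1) by (simp add: cont_iso_def continuous_map_in_subtopology)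

text \<open>A continuous isotone h on N equals nachbin_ext g for the g extending h \<circ> n along \<beta>, as
  both agree on the dense image of n; so the separation theorem for N transfers to nachbin_ext.\<close>

lemma leN_iff_nachbin_ext:
  assumes p: "p \<in> topspace N" and q: "q \<in> topspace N"
  shows "leN p q \<longleftrightarrow> (\<forall>g\<in>extensions. nachbin_ext g p \<le> nachbin_ext g q)"
proof
  show "leN p q \<Longrightarrow> \<forall>g\<in>extensions. nachbin_ext g p \<le> nachbin_ext g q"
    using nachbin_ext(1) p q by (simp add: cont_iso_def isotone_def)
next
  assume le: "\<forall>g\<in>extensions. nachbin_ext g p \<le> nachbin_ext g q"
  show "leN p q"
  proof (rule ccontr)
    assume "\<not> leN p q"
    then obtain h where h: "h \<in> cont_iso N leN" "h q = 0" "h p = 1"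
      using cont_iso_separation[OF compact_space_N Hausdorff_space_N _ p q] T2_ordered_N
      unfolding T2_ordered_def by blast
    have "(\<lambda>c. h (n c)) \<in> cont_iso QE (quot_le le)"
      using h(1) continuous_map_compose[OF continuous_map_n] isotone_n n_in_topspace
      by (auto simp: cont_iso_def isotone_def o_def)
    then obtain g where g: "g \<in> extensions" "\<forall>z\<in>topspace E. g (\<beta> z) = h (n (proj z))"
      using extension_exists[OF cont_iso_lift] by blast
    have "nachbin_ext g r = h r" if "r \<in> topspace N" for r
    proof (rule forall_in_closure_of_eq[where Y = euclideanreal and f = "nachbin_ext g" and g = h])
      show "r \<in> N closure_of (n ` topspace QE)"
        using dense_n_image that by simp
      show "continuous_map N euclideanreal h"
        using h(1) by (simp add: cont_iso_def continuous_map_in_subtopology)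
      fix y assume "y \<in> n ` topspace QE"
      then obtain x where "x \<in> topspace E" "y = n (proj x)"
        by (auto simp: topspace_quot_top)
      then show "nachbin_ext g y = h y"
        using nachbin_ext(2)[OF g(1)] quot_lift_extension_phi[OF g(1)] g(2)
        by (simp add: topspace_quot_top)
    qed (use continuous_map_nachbin_ext[OF g(1)] in auto)
    then show False
      using le g(1) p q h by fastforce
  qed
qed

lemma nachbin_ext_approximable:
  assumes p: "p \<in> topspace N" and J: "finite J" "J \<subseteq> extensions" and "0 < \<epsilon>"
  shows "\<exists>d\<in>topspace QB. \<forall>g\<in>J. \<bar>quot_lift g d - nachbin_ext g p\<bar> < \<epsilon>"
proof -
  let ?W = "{q \<in> topspace N. \<forall>g\<in>J. \<bar>nachbin_ext g q - nachbin_ext g p\<bar> < \<epsilon>}"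
  have "openin N ?W"
    using J continuous_map_nachbin_ext by (intro openin_near_finitely_many) auto
  moreover have "p \<in> ?W"
    using p \<open>0 < \<epsilon>\<close> by auto
  moreover have "p \<in> N closure_of (n ` topspace QE)"
    using p dense_n_image by simp
  ultimately have "\<exists>y. y \<in> n ` topspace QE \<and> y \<in> ?W"
    unfolding in_closure_of by (elim conjE allE[of _ ?W]) simp
  then obtain c where c: "c \<in> topspace QE" "n c \<in> ?W"
    by blast
  then have "\<bar>quot_lift g (phi c) - nachbin_ext g p\<bar> < \<epsilon>" if "g \<in> J" for g
    using that c nachbin_ext(2)[OF subsetD[OF J(2) that] c(1)] by auto
  then show ?thesis
    using phi_in_topspace[OF c(1)] by blast
qed

definition nachbin_map :: "'c \<Rightarrow> 'b set" where
  "nachbin_map p = (SOME d. d \<in> topspace QB \<and> (\<forall>g\<in>extensions. quot_lift g d = nachbin_ext g p))"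

lemma nachbin_map:
  assumes "p \<in> topspace N"
  shows "nachbin_map p \<in> topspace QB" "\<And>g. g \<in> extensions \<Longrightarrow> quot_lift g (nachbin_map p) = nachbin_ext g p"
proof -
  have "\<exists>d\<in>topspace QB. \<forall>g\<in>extensions. quot_lift g d = nachbin_ext g p"
    using compact_space_QB continuous_map_quot_lift_extension_real nachbin_ext_approximable[OF assms]
    by (rule compact_space_realizes_values)
  then have "\<exists>d. d \<in> topspace QB \<and> (\<forall>g\<in>extensions. quot_lift g d = nachbin_ext g p)"
    by blast
  then have "nachbin_map p \<in> topspace QB \<and> (\<forall>g\<in>extensions. quot_lift g (nachbin_map p) = nachbin_ext g p)"
    unfolding nachbin_map_def by (rule someI_ex)
  then show "nachbin_map p \<in> topspace QB" "\<And>g. g \<in> extensions \<Longrightarrow> quot_lift g (nachbin_map p) = nachbin_ext g p"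
    by auto
qed

lemma continuous_map_nachbin_map: "continuous_map N QB nachbin_map"
  using compact_space_QB continuous_map_quot_lift_extension_real QB_eqI continuous_map_nachbin_ext
    nachbin_map by (rule continuous_map_into_separated)

lemma nachbin_map_n: "c \<in> topspace QE \<Longrightarrow> nachbin_map (n c) = phi c"
  by (intro QB_eqI) (simp_all add: nachbin_map n_in_topspace phi_in_topspace nachbin_ext(2))

lemma quot_le_nachbin_map_iff:
  "p \<in> topspace N \<Longrightarrow> q \<in> topspace N \<Longrightarrow> quot_le leB (nachbin_map p) (nachbin_map q) \<longleftrightarrow> leN p q"
  by (simp add: quot_le_QB_iff nachbin_map leN_iff_nachbin_ext)

lemma inj_on_nachbin_map: "inj_on nachbin_map (topspace N)"
proof (rule inj_onI)
  fix p q assume "p \<in> topspace N" "q \<in> topspace N" "nachbin_map p = nachbin_map q"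
  moreover from this have "leN p q" "leN q p"
    using quot_le_nachbin_map_iff preorder_quot_le_QB nachbin_map(1) unfolding preorder_on_def by metis+
  ultimately show "p = q"
    using T2_ordered_N unfolding T2_ordered_def partial_order_on_def by blast
qed

lemma nachbin_map_image: "nachbin_map ` topspace N = topspace QB"
proof
  show "nachbin_map ` topspace N \<subseteq> topspace QB"
    using nachbin_map(1) by blast
  have "compactin N (topspace N)"
    using compact_space_N by (simp add: compact_space_def)
  then have "compactin QB (nachbin_map ` topspace N)"
    using continuous_map_nachbin_map by (rule image_compactin)
  then have "closedin QB (nachbin_map ` topspace N)"
    using Hausdorff_space_QB compactin_imp_closedin by blast
  moreover have "phi ` topspace QE \<subseteq> nachbin_map ` topspace N"
  proof
    fix d assume "d \<in> phi ` topspace QE"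
    then obtain c where "c \<in> topspace QE" "d = phi c"
      by blast
    then show "d \<in> nachbin_map ` topspace N"
      using nachbin_map_n[of c] n_in_topspace[of c] by force
  qed
  ultimately have "QB closure_of (phi ` topspace QE) \<subseteq> nachbin_map ` topspace N"
    by (rule closure_of_minimal[rotated])
  then show "topspace QB \<subseteq> nachbin_map ` topspace N"
    by (simp add: dense_phi_image)
qed

lemma compact_equiv_nachbin: "compact_equiv QE QB (quot_le leB) phi N leN n"
proof -
  define D where "D = inv_into (topspace N) nachbin_map"
  have D: "D d \<in> topspace N" "nachbin_map (D d) = d" if "d \<in> topspace QB" for d
    using that nachbin_map_image by (auto simp: D_def inv_into_into f_inv_into_f)
  have "continuous_map QB N D"
    using continuous_inverse_map[OF compact_space_N Hausdorff_space_QB continuous_map_nachbin_map,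
        of D "topspace QB"] inj_on_nachbin_map nachbin_map_image by (simp add: D_def)
  moreover have "isotone QB (quot_le leB) leN D"
    unfolding isotone_def
  proof (intro ballI impI)
    fix d e assume d: "d \<in> topspace QB" and e: "e \<in> topspace QB" and "quot_le leB d e"
    then show "leN (D d) (D e)"
      using quot_le_nachbin_map_iff[OF D(1)[OF d] D(1)[OF e]] by (simp add: D(2)[OF d] D(2)[OF e])
  qed
  moreover have "D (phi c) = n c" if "c \<in> topspace QE" for c
    using that nachbin_map_n inj_on_nachbin_map n_in_topspace by (simp add: D_def flip: nachbin_map_n)
  moreover have "isotone N leN (quot_le leB) nachbin_map"
    using quot_le_nachbin_map_iff by (simp add: isotone_def)
  ultimately show ?thesis
    unfolding compact_equiv_def compact_le_def
    using continuous_map_nachbin_map nachbin_map_n by blast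
qed

end

theorem mainTheorem9:
  fixes E :: "'a topology" and le :: "'a \<Rightarrow> 'a \<Rightarrow> bool"
    and B :: "'b topology" and \<beta> :: "'a \<Rightarrow> 'b"
  assumes "T2_preordered E le" and "Tychonoff_space E"
    and "completely_regularly_ordered (quot_top E le) (quot_le le)"
    and "stone_cech E B \<beta>"
  shows "(\<forall>x\<in>topspace E. \<forall>y\<in>topspace E. le x y \<longleftrightarrow> (\<forall>f\<in>cont_iso E le. f x \<le> f y))
    \<and> (let leB = beta_le E le B \<beta>;
           Proj = quot_proj B leB;
           proj = quot_proj E le;
           phi = (\<lambda>c. Proj (\<beta> (SOME x. x \<in> c)))
       in (\<forall>x\<in>topspace E. \<forall>y\<in>topspace E. proj x = proj y \<longrightarrow> Proj (\<beta> x) = Proj (\<beta> y))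
        \<and> order_compactification (quot_top E le) (quot_le le) (quot_top B leB) (quot_le leB) phi
        \<and> (\<forall>(N :: 'c topology) leN n.
              nachbin_compactification (quot_top E le) (quot_le le) N leN n \<longrightarrow>
              compact_equiv (quot_top E le) (quot_top B leB) (quot_le leB) phi N leN n)
        \<and> (\<forall>x\<in>topspace E. phi (proj x) = Proj (\<beta> x)))"
proof -
  \<comment> \<open>Tychonoff_space E is what makes \<beta>E exist; here \<beta>E is given.\<close>
  interpret preordered_stone_cech E le B \<beta>
    using assms(1,3,4) by unfold_locales
  have phi: "(\<lambda>c. Proj (\<beta> (SOME x. x \<in> c))) = phi"
    by (rule ext) (simp add: quot_lift_def)
  show ?thesis
    unfolding Let_def phi
  proof (intro conjI ballI allI impI)
    show "le x y \<longleftrightarrow> (\<forall>f\<in>cont_iso E le. f x \<le> f y)" if "x \<in> topspace E" "y \<in> topspace E" for x y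
      using that by (rule le_iff_cont_iso)
    show "Proj (\<beta> x) = Proj (\<beta> y)" if "x \<in> topspace E" "y \<in> topspace E" "proj x = proj y" for x y
      using that phi_proj by metis
    show "order_compactification QE (quot_le le) QB (quot_le leB) phi"
      by (rule order_compactification_phi)
    show "compact_equiv QE QB (quot_le leB) phi N leN n"
      if "nachbin_compactification QE (quot_le le) N leN n" for N :: "'c topology" and leN n
    proof -
      interpret preordered_stone_cech_nachbin E le B \<beta> N leN n
        using that by unfold_locales
      show ?thesis
        by (rule compact_equiv_nachbin)
    qed
    show "Proj (\<beta> (SOME y. y \<in> proj x)) = Proj (\<beta> x)" if "x \<in> topspace E" for x
      using phi_proj[OF that] by (simp add: quot_lift_def)
  qed
qed

end
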